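(* Let $n\ge 2$ and consider the ladder system, i.e. the vector field $X_f=\sum_{i=1}^n x_i\big(\sum_{j=1}^n (1+i-j)\,x_j\big)\frac{\partial}{\partial x_i}$ on $\mathbf{C}^n$. Then for every $l,m\in\{1,\dots,n\}$ the vector field $$Y^l_m = x_m\, u^{\,l-m-1}\Big(D - u\,\frac{\partial}{\partial x_l}\Big)$$ is a Lie symmetry of the ladder system, i.e. $[X_f, Y^l_m]=0$ (on the open set $\{u\neq 0\}$, where the coefficients are defined).
   Context: Coordinates $x=(x_1,\dots,x_n)\in\mathbf{C}^n$. The $n$-dimensional homogeneous Lotka–Volterra (HLV) system with coefficients $a_{ij}\in\mathbf{C}$ is $\dot x_i = x_i\sum_{j=1}^n a_{ij}x_j$, $i=1,\dots,n$, identified with the vector field $X_f=\sum_i x_i\big(\sum_j a_{ij}x_j\big)\partial/\partial x_i$. The ladder system is the HLV system with $a_{ij}=1+i-j$ (matrix with first row $1,0,\dots,-n+2$ and last row $n,n-1,\dots,1$). Notation: $u=\sum_{j=1}^n x_j$ and $D=\sum_{j=1}^n x_j\,\partial/\partial x_j$. A vector field $X$ is a Lie symmetry of the system if $[X_f,X]=X_fX-XX_f=0$. *)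

theory Defs
  imports "HOL-Analysis.Analysis"
begin

text \<open>Points of C^n are functions nat => complex; only coordinates 1..n matter.
  A vector field is a map from points to coefficient functions (coordinate i gives
  the coefficient of d/dx_i).\<close>

type_synonym vfield = "(nat \<Rightarrow> complex) \<Rightarrow> nat \<Rightarrow> complex"

definition pdiff :: "((nat \<Rightarrow> complex) \<Rightarrow> complex) \<Rightarrow> nat \<Rightarrow> (nat \<Rightarrow> complex) \<Rightarrow> complex" where
  "pdiff F k x = deriv (\<lambda>t. F (x(k := t))) (x k)"

definition lie_bracket :: "nat \<Rightarrow> vfield \<Rightarrow> vfield \<Rightarrow> vfield" where
  "lie_bracket n X Y x i =
     (\<Sum>k=1..n. X x k * pdiff (\<lambda>y. Y y i) k x - Y x k * pdiff (\<lambda>y. X y i) k x)"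

definition hlv :: "nat \<Rightarrow> (nat \<Rightarrow> nat \<Rightarrow> complex) \<Rightarrow> vfield" where
  "hlv n a x i = x i * (\<Sum>j=1..n. a i j * x j)"

definition ladder_coeff :: "nat \<Rightarrow> nat \<Rightarrow> complex" where
  "ladder_coeff i j = of_int (1 + int i - int j)"

definition usum :: "nat \<Rightarrow> (nat \<Rightarrow> complex) \<Rightarrow> complex" where
  "usum n x = (\<Sum>j=1..n. x j)"

text \<open>Y^l_m = x_m u^(l-m-1) (D - u d/dx_l), D = sum x_j d/dx_j.\<close>
definition Ysym :: "nat \<Rightarrow> nat \<Rightarrow> nat \<Rightarrow> vfield" where
  "Ysym n l m x i = x m * (usum n x) powi (int l - int m - 1) *
       (x i - (if i = l then usum n x else 0))"

end

theory Submission
  imports Defs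
begin

text \<open>Write \<open>Y\<^sup>l\<^sub>m = f E\<close> with \<open>f = x\<^sub>m u\<^bsup>l-m-1\<^esup>\<close> (\<open>ysym_factor\<close>) and
  \<open>E = D - u \<partial>/\<partial>x\<^sub>l\<close> (\<open>euler_shift\<close>), and put \<open>\<lambda> = l u - \<Sum>\<^sub>j j x\<^sub>j\<close>.
  For the ladder field \<open>X\<close> one has \<open>X(u) = u\<^sup>2\<close> and \<open>\<Sum>\<^sub>j a\<^sub>i\<^sub>j E\<^sub>j = \<lambda>\<close>, which give
  \<open>X(f) = \<lambda> f\<close> and \<open>[X, E] = -\<lambda> E\<close>; hence \<open>[X, f E] = X(f) E + f [X, E] = 0\<close>.\<close>

definition lie_deriv :: "nat \<Rightarrow> vfield \<Rightarrow> ((nat \<Rightarrow> complex) \<Rightarrow> complex) \<Rightarrow> (nat \<Rightarrow> complex) \<Rightarrow> complex" where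
  "lie_deriv n X F x = (\<Sum>k=1..n. X x k * pdiff F k x)"

definition partially_differentiable :: "nat \<Rightarrow> ((nat \<Rightarrow> complex) \<Rightarrow> complex) \<Rightarrow> (nat \<Rightarrow> complex) \<Rightarrow> bool" where
  "partially_differentiable n F x \<longleftrightarrow>
     (\<forall>k\<in>{1..n}. (\<lambda>t. F (x(k := t))) field_differentiable at (x k))"

lemma lie_bracket_eq_lie_deriv:
  "lie_bracket n X Y x i = lie_deriv n X (\<lambda>y. Y y i) x - lie_deriv n Y (\<lambda>y. X y i) x"
  by (simp add: lie_bracket_def lie_deriv_def sum_subtractf)

lemma lie_deriv_scale_field:
  "lie_deriv n (\<lambda>y j. f y * Z y j) F x = f x * lie_deriv n Z F x"
  by (simp add: lie_deriv_def sum_distrib_left mult.assoc)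

lemma partially_differentiable_mult:
  assumes "partially_differentiable n F x" "partially_differentiable n G x"
  shows "partially_differentiable n (\<lambda>y. F y * G y) x"
  using assms by (auto simp: partially_differentiable_def intro: field_differentiable_mult)

lemma lie_deriv_mult:
  assumes "partially_differentiable n F x" "partially_differentiable n G x"
  shows "lie_deriv n X (\<lambda>y. F y * G y) x = F x * lie_deriv n X G x + G x * lie_deriv n X F x"
proof -
  have "pdiff (\<lambda>y. F y * G y) k x = F x * pdiff G k x + G x * pdiff F k x" if "k \<in> {1..n}" for k
    using assms that by (simp add: pdiff_def partially_differentiable_def mult.commute)
  then show ?thesis
    by (simp add: lie_deriv_def algebra_simps sum.distrib sum_distrib_left)
qed

lemma lie_bracket_scale_right:
  assumes "partially_differentiable n f x" "partially_differentiable n (\<lambda>y. Z y i) x"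
  shows "lie_bracket n X (\<lambda>y j. f y * Z y j) x i =
    lie_deriv n X f x * Z x i + f x * lie_bracket n X Z x i"
  using assms by (simp add: lie_bracket_eq_lie_deriv lie_deriv_mult lie_deriv_scale_field algebra_simps)

lemma partially_differentiable_power_int:
  assumes "partially_differentiable n F x" "F x \<noteq> 0"
  shows "partially_differentiable n (\<lambda>y. F y powi p) x"
  using assms unfolding partially_differentiable_def field_differentiable_def
  by (metis fun_upd_triv DERIV_power_int)

lemma lie_deriv_power_int:
  assumes "partially_differentiable n F x" "F x \<noteq> 0"
  shows "lie_deriv n X (\<lambda>y. F y powi p) x = of_int p * F x powi (p - 1) * lie_deriv n X F x"
proof -
  have "pdiff (\<lambda>y. F y powi p) k x = of_int p * F x powi (p - 1) * pdiff F k x"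
    if "k \<in> {1..n}" for k
  proof -
    have "((\<lambda>t. F (x(k := t))) has_field_derivative pdiff F k x) (at (x k))"
      using assms(1) that unfolding partially_differentiable_def pdiff_def
      by (simp add: field_differentiable_derivI)
    from DERIV_power_int[OF this, of p] show ?thesis
      using assms(2) unfolding pdiff_def by (simp add: DERIV_imp_deriv)
  qed
  then show ?thesis
    by (simp add: lie_deriv_def sum_distrib_left mult_ac)
qed

lemma sum_delta_mult:
  "(j::nat) \<in> {1..n} \<Longrightarrow> (\<Sum>k=1..n. (if k = j then 1 else 0) * f k) = (f j :: 'a::semiring_1)"
  by (simp add: if_distrib[of "\<lambda>c. c * _"] cong: if_cong)

lemma has_field_derivative_update:
  "((\<lambda>t. (x(k := t)) j) has_field_derivative (if j = k then 1 else 0)) (at z)"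
  for x :: "nat \<Rightarrow> complex"
  by (cases "j = k") (auto intro: derivative_eq_intros)

lemma has_field_derivative_linear_update:
  fixes x :: "nat \<Rightarrow> complex"
  assumes "k \<in> {1..n}"
  shows "((\<lambda>t. \<Sum>j=1..n. c j * (x(k := t)) j) has_field_derivative c k) (at z)"
proof -
  have "((\<lambda>t. \<Sum>j=1..n. c j * (x(k := t)) j) has_field_derivative
      (\<Sum>j=1..n. c j * (if j = k then 1 else 0))) (at z)"
    by (intro DERIV_sum DERIV_cmult has_field_derivative_update)
  then show ?thesis
    using sum_delta_mult[OF assms, of c] by (simp add: mult.commute)
qed

lemma partially_differentiable_linear:
  "partially_differentiable n (\<lambda>y. \<Sum>j=1..n. c j * y j) x"
  unfolding partially_differentiable_def field_differentiable_def
  using has_field_derivative_linear_update by blast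

lemma lie_deriv_linear:
  "lie_deriv n X (\<lambda>y. \<Sum>j=1..n. c j * y j) x = (\<Sum>k=1..n. c k * X x k)"
proof -
  have "pdiff (\<lambda>y. \<Sum>j=1..n. c j * y j) k x = c k" if "k \<in> {1..n}" for k
    unfolding pdiff_def by (rule DERIV_imp_deriv[OF has_field_derivative_linear_update[OF that]])
  then show ?thesis
    by (simp add: lie_deriv_def mult.commute)
qed

lemma partially_differentiable_coordinate:
  "partially_differentiable n (\<lambda>y. y j) x"
  unfolding partially_differentiable_def field_differentiable_def
  by (blast intro: has_field_derivative_update)

lemma lie_deriv_coordinate:
  assumes "j \<in> {1..n}"
  shows "lie_deriv n X (\<lambda>y. y j) x = X x j"
proof -
  have "X x k * pdiff (\<lambda>y. y j) k x = (if j = k then X x k else 0)" for k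
    unfolding pdiff_def DERIV_imp_deriv[OF has_field_derivative_update] by simp
  with assms show ?thesis
    by (simp add: lie_deriv_def)
qed

lemma usum_eq_linear: "usum n = (\<lambda>y. \<Sum>j=1..n. 1 * y j)"
  by (simp add: usum_def fun_eq_iff)

lemma partially_differentiable_usum: "partially_differentiable n (usum n) x"
  unfolding usum_eq_linear by (rule partially_differentiable_linear)

lemma lie_deriv_usum: "lie_deriv n X (usum n) x = (\<Sum>k=1..n. X x k)"
  unfolding usum_eq_linear lie_deriv_linear by simp

lemma lie_deriv_hlv:
  assumes "i \<in> {1..n}"
  shows "lie_deriv n Z (\<lambda>y. hlv n a y i) x =
    Z x i * (\<Sum>j=1..n. a i j * x j) + x i * (\<Sum>j=1..n. a i j * Z x j)"
proof -
  have "(\<lambda>y. hlv n a y i) = (\<lambda>y. y i * (\<Sum>j=1..n. a i j * y j))"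
    by (simp add: hlv_def fun_eq_iff)
  then show ?thesis
    using assms
    by (simp only: lie_deriv_mult partially_differentiable_coordinate partially_differentiable_linear
        lie_deriv_coordinate lie_deriv_linear) (simp add: mult.commute)
qed

definition weighted_usum :: "nat \<Rightarrow> (nat \<Rightarrow> complex) \<Rightarrow> complex" where
  "weighted_usum n x = (\<Sum>j=1..n. of_nat j * x j)"

lemma ladder_row:
  "(\<Sum>j=1..n. ladder_coeff i j * x j) = (1 + of_nat i) * usum n x - weighted_usum n x"
proof -
  have "(\<Sum>j=1..n. ladder_coeff i j * x j) = (\<Sum>j=1..n. (1 + of_nat i) * x j - of_nat j * x j)"
    by (rule sum.cong) (auto simp: ladder_coeff_def algebra_simps)
  then show ?thesis
    by (simp add: sum_subtractf sum_distrib_left usum_def weighted_usum_def)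
qed

lemma sum_hlv_ladder: "(\<Sum>k=1..n. hlv n ladder_coeff x k) = usum n x ^ 2"
proof -
  have "(\<Sum>k=1..n. hlv n ladder_coeff x k) =
      (\<Sum>k=1..n. x k * usum n x + (of_nat k * x k) * usum n x - x k * weighted_usum n x)"
    unfolding hlv_def ladder_row by (rule sum.cong) (auto simp: algebra_simps)
  also have "\<dots> = usum n x * usum n x + weighted_usum n x * usum n x - usum n x * weighted_usum n x"
    by (simp add: sum_subtractf sum.distrib sum_distrib_right[symmetric] usum_def weighted_usum_def)
  finally show ?thesis
    by (simp add: power2_eq_square)
qed

definition euler_shift :: "nat \<Rightarrow> nat \<Rightarrow> vfield" where
  "euler_shift n l x i = x i - (if i = l then usum n x else 0)"

lemma euler_shift_linear:
  assumes "i \<in> {1..n}"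
  shows "(\<lambda>y. euler_shift n l y i) =
    (\<lambda>y. \<Sum>j=1..n. ((if j = i then 1 else 0) - (if i = l then 1 else 0)) * y j)"
proof -
  from sum_delta_mult[OF assms, where 'a = complex] show ?thesis
    by (simp add: fun_eq_iff euler_shift_def usum_def left_diff_distrib sum_subtractf
        flip: sum_distrib_left)
qed

lemma partially_differentiable_euler_shift:
  "i \<in> {1..n} \<Longrightarrow> partially_differentiable n (\<lambda>y. euler_shift n l y i) x"
  unfolding euler_shift_linear by (rule partially_differentiable_linear)

lemma lie_deriv_euler_shift:
  assumes "i \<in> {1..n}"
  shows "lie_deriv n X (\<lambda>y. euler_shift n l y i) x =
    X x i - (if i = l then (\<Sum>k=1..n. X x k) else 0)"
proof -
  have "lie_deriv n X (\<lambda>y. euler_shift n l y i) x =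
      (\<Sum>k=1..n. ((if k = i then 1 else 0) - (if i = l then 1 else 0)) * X x k)"
    unfolding euler_shift_linear[OF assms] by (rule lie_deriv_linear)
  then show ?thesis
    using sum_delta_mult[OF assms, of "X x"]
    by (cases "i = l") (simp_all add: left_diff_distrib sum_subtractf)
qed

lemma usum_euler_shift: "l \<in> {1..n} \<Longrightarrow> usum n (euler_shift n l x) = 0"
  by (simp add: euler_shift_def usum_def sum_subtractf)

lemma weighted_usum_euler_shift:
  assumes "l \<in> {1..n}"
  shows "weighted_usum n (euler_shift n l x) = weighted_usum n x - of_nat l * usum n x"
proof -
  have "weighted_usum n (euler_shift n l x) =
      (\<Sum>j=1..n. of_nat j * x j - (if j = l then of_nat l * usum n x else 0))"
    unfolding weighted_usum_def euler_shift_def by (rule sum.cong) (auto simp: algebra_simps)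
  with assms show ?thesis
    by (simp add: sum_subtractf weighted_usum_def)
qed

lemma lie_bracket_ladder_euler_shift:
  assumes "l \<in> {1..n}" "i \<in> {1..n}"
  shows "lie_bracket n (hlv n ladder_coeff) (euler_shift n l) x i =
    - (of_nat l * usum n x - weighted_usum n x) * euler_shift n l x i"
proof -
  have along_hlv: "lie_deriv n (hlv n ladder_coeff) (\<lambda>y. euler_shift n l y i) x =
      hlv n ladder_coeff x i - (if i = l then usum n x ^ 2 else 0)"
    unfolding lie_deriv_euler_shift[OF assms(2)] sum_hlv_ladder ..
  have along_euler_shift: "lie_deriv n (euler_shift n l) (\<lambda>y. hlv n ladder_coeff y i) x =
      euler_shift n l x i * ((1 + of_nat i) * usum n x - weighted_usum n x)
      + x i * (of_nat l * usum n x - weighted_usum n x)"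
    unfolding lie_deriv_hlv[OF assms(2)] ladder_row usum_euler_shift[OF assms(1)]
      weighted_usum_euler_shift[OF assms(1)] by simp
  show ?thesis
    unfolding lie_bracket_eq_lie_deriv along_hlv along_euler_shift
    unfolding hlv_def ladder_row euler_shift_def
    by (cases "i = l") (simp_all add: power2_eq_square algebra_simps)
qed

definition ysym_factor :: "nat \<Rightarrow> nat \<Rightarrow> nat \<Rightarrow> (nat \<Rightarrow> complex) \<Rightarrow> complex" where
  "ysym_factor n l m x = x m * usum n x powi (int l - int m - 1)"

lemma Ysym_eq_scaled_euler_shift:
  "Ysym n l m = (\<lambda>y i. ysym_factor n l m y * euler_shift n l y i)"
  by (simp add: fun_eq_iff Ysym_def ysym_factor_def euler_shift_def)

lemma partially_differentiable_ysym_factor: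
  "usum n x \<noteq> 0 \<Longrightarrow> partially_differentiable n (ysym_factor n l m) x"
  unfolding ysym_factor_def
  by (intro partially_differentiable_mult partially_differentiable_coordinate
      partially_differentiable_power_int partially_differentiable_usum)

lemma lie_deriv_ladder_ysym_factor:
  assumes "m \<in> {1..n}" "usum n x \<noteq> 0"
  shows "lie_deriv n (hlv n ladder_coeff) (ysym_factor n l m) x =
    (of_nat l * usum n x - weighted_usum n x) * ysym_factor n l m x"
proof -
  define u where "u = usum n x"
  define p where "p = int l - int m - 1"
  have factor_eq: "ysym_factor n l m = (\<lambda>y. y m * usum n y powi p)"
    by (simp add: fun_eq_iff ysym_factor_def p_def)
  have powi_shift: "u powi (p - 1) * u ^ 2 = u powi p * u"
  proof -
    have "u powi p = u powi (p - 1) * u"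
      using power_int_add_1[of u "p - 1"] assms(2) unfolding u_def by simp
    then show ?thesis
      by (simp add: power2_eq_square mult.assoc)
  qed
  have exponent: "of_int p = (of_nat l - of_nat m - 1 :: complex)"
    by (simp add: p_def)
  have "lie_deriv n (hlv n ladder_coeff) (ysym_factor n l m) x =
      x m * lie_deriv n (hlv n ladder_coeff) (\<lambda>y. usum n y powi p) x
      + u powi p * lie_deriv n (hlv n ladder_coeff) (\<lambda>y. y m) x"
    unfolding factor_eq u_def
    using assms(2) by (intro lie_deriv_mult partially_differentiable_coordinate
        partially_differentiable_power_int partially_differentiable_usum)
  also have "\<dots> = x m * (of_int p * (u powi (p - 1) * u ^ 2))
      + u powi p * (x m * ((1 + of_nat m) * u - weighted_usum n x))"
    unfolding lie_deriv_power_int[OF partially_differentiable_usum assms(2)]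
      lie_deriv_coordinate[OF assms(1)] lie_deriv_usum sum_hlv_ladder
    unfolding hlv_def ladder_row u_def by (simp only: mult.assoc)
  also have "\<dots> = (of_nat l * u - weighted_usum n x) * (x m * u powi p)"
    unfolding powi_shift exponent by (simp add: algebra_simps)
  finally show ?thesis
    unfolding ysym_factor_def u_def p_def .
qed

theorem theorem1:
  fixes n l m :: nat and x :: "nat \<Rightarrow> complex" and i :: nat
  assumes "n \<ge> 2" and "l \<in> {1..n}" and "m \<in> {1..n}"
    and "usum n x \<noteq> 0" and "i \<in> {1..n}"
  shows "lie_bracket n (hlv n ladder_coeff) (Ysym n l m) x i = 0"
proof -
  define f where "f = ysym_factor n l m"
  define c where "c = of_nat l * usum n x - weighted_usum n x"
  have "lie_bracket n (hlv n ladder_coeff) (Ysym n l m) x i =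
      lie_deriv n (hlv n ladder_coeff) f x * euler_shift n l x i
      + f x * lie_bracket n (hlv n ladder_coeff) (euler_shift n l) x i"
    unfolding Ysym_eq_scaled_euler_shift f_def
    using assms by (intro lie_bracket_scale_right partially_differentiable_ysym_factor
        partially_differentiable_euler_shift)
  also have "\<dots> = c * f x * euler_shift n l x i + f x * (- c * euler_shift n l x i)"
    unfolding f_def c_def lie_deriv_ladder_ysym_factor[OF assms(3,4)]
      lie_bracket_ladder_euler_shift[OF assms(2,5)] by (simp add: algebra_simps)
  finally show ?thesis
    by simp
qed

end
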